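(* Let $G$ be a finite group. The minimal cardinality of a generating set of $G$ is at most the minimal length $\ell$ of a chain of subgroups $\{e\}=H_0<H_1<\dots<H_\ell=G$ such that every interval $[H_i,H_{i+1}]$ of the subgroup lattice is top Boolean.
   Context: For subgroups $H\subseteq K$ of $G$, $[H,K]$ is the lattice of subgroups between $H$ and $K$. The top interval of a finite lattice $L$ is $[t,\hat 1]$ where $t$ is the meet of all coatoms (maximal elements of $L\setminus\{\hat 1\}$); $L$ is top Boolean if its top interval is a Boolean lattice (distributive, bounded, every element has a unique complement). *)

theory Defs
  imports "HOL-Algebra.Algebra"
begin

definition subgroup_interval :: "('a, 'b) monoid_scheme \<Rightarrow> 'a set \<Rightarrow> 'a set \<Rightarrow> 'a set set" where
  "subgroup_interval G H K = {L. subgroup L G \<and> H \<subseteq> L \<and> L \<subseteq> K}"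

definition subgroup_join :: "('a, 'b) monoid_scheme \<Rightarrow> 'a set \<Rightarrow> 'a set \<Rightarrow> 'a set" where
  "subgroup_join G A B = generate G (A \<union> B)"

definition interval_coatoms :: "('a, 'b) monoid_scheme \<Rightarrow> 'a set \<Rightarrow> 'a set \<Rightarrow> 'a set set" where
  "interval_coatoms G H K =
     {M \<in> subgroup_interval G H K. M \<noteq> K \<and>
        (\<forall>L \<in> subgroup_interval G H K. M \<subseteq> L \<longrightarrow> L = M \<or> L = K)}"

text \<open>Meet of all coatoms (the meet of the empty family is the top K).\<close>
definition top_interval_bottom :: "('a, 'b) monoid_scheme \<Rightarrow> 'a set \<Rightarrow> 'a set \<Rightarrow> 'a set" where
  "top_interval_bottom G H K = K \<inter> \<Inter> (interval_coatoms G H K)"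

text \<open>The interval [B,T] (a sublattice of the subgroup lattice, meet = intersection,
  join = generated subgroup) is a Boolean lattice: distributive, and every element
  has a unique complement (bounded holds since it has bottom B and top T).\<close>
definition boolean_subgroup_interval :: "('a, 'b) monoid_scheme \<Rightarrow> 'a set \<Rightarrow> 'a set \<Rightarrow> bool" where
  "boolean_subgroup_interval G lo hi \<longleftrightarrow>
     (\<forall>x \<in> subgroup_interval G lo hi. \<forall>y \<in> subgroup_interval G lo hi. \<forall>z \<in> subgroup_interval G lo hi.
        x \<inter> subgroup_join G y z = subgroup_join G (x \<inter> y) (x \<inter> z)) \<and>
     (\<forall>x \<in> subgroup_interval G lo hi. \<exists>!y. y \<in> subgroup_interval G lo hi \<and>
        x \<inter> y = lo \<and> subgroup_join G x y = hi)"

definition top_boolean :: "('a, 'b) monoid_scheme \<Rightarrow> 'a set \<Rightarrow> 'a set \<Rightarrow> bool" where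
  "top_boolean G H K \<longleftrightarrow> boolean_subgroup_interval G (top_interval_bottom G H K) K"

definition min_gen_card :: "('a, 'b) monoid_scheme \<Rightarrow> nat" where
  "min_gen_card G = Min {card S | S. S \<subseteq> carrier G \<and> generate G S = carrier G}"

end

theory Submission
  imports Defs
begin

text \<open>Let t be the meet of the coatoms of [H,K]. Distributivity of [t,K] makes every coatom M
  prime there: a \<inter> b \<subseteq> M forces a \<subseteq> M or b \<subseteq> M. Hence K intersected with any family of
  coatoms is contained in no coatom outside the family, and by induction on the number of coatoms
  one multiplies together an element g of K lying in no coatom. Then H and g generate K. Doing this
  at every step of the chain produces l generators of G.\<close>

definition distributive_subgroup_interval :: "('a, 'b) monoid_scheme \<Rightarrow> 'a set \<Rightarrow> 'a set \<Rightarrow> bool" where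
  "distributive_subgroup_interval G lo hi \<longleftrightarrow>
     (\<forall>x \<in> subgroup_interval G lo hi. \<forall>y \<in> subgroup_interval G lo hi. \<forall>z \<in> subgroup_interval G lo hi.
        x \<inter> subgroup_join G y z = subgroup_join G (x \<inter> y) (x \<inter> z))"

lemma boolean_subgroup_interval_imp_distributive:
  "boolean_subgroup_interval G lo hi \<Longrightarrow> distributive_subgroup_interval G lo hi"
  unfolding boolean_subgroup_interval_def distributive_subgroup_interval_def by blast

lemma finite_subgroup_interval:
  "finite (carrier G) \<Longrightarrow> finite (subgroup_interval G H K)"
  by (rule finite_subset[of _ "Pow (carrier G)"])
     (auto simp: subgroup_interval_def dest: subgroup.subset)

lemma interval_coatoms_subset: "interval_coatoms G H K \<subseteq> subgroup_interval G H K"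
  unfolding interval_coatoms_def by blast

lemma interval_coatomsD:
  assumes "M \<in> interval_coatoms G H K"
  shows "M \<in> subgroup_interval G H K" "M \<noteq> K"
    and "\<And>L. L \<in> subgroup_interval G H K \<Longrightarrow> M \<subseteq> L \<Longrightarrow> L = M \<or> L = K"
  using assms unfolding interval_coatoms_def by blast+

lemma min_gen_card_le_card:
  assumes "finite (carrier G)" "S \<subseteq> carrier G" "generate G S = carrier G"
  shows "min_gen_card G \<le> card S"
proof -
  have "{card S | S. S \<subseteq> carrier G \<and> generate G S = carrier G} \<subseteq> card ` Pow (carrier G)"
    by auto
  then have "finite {card S | S. S \<subseteq> carrier G \<and> generate G S = carrier G}"
    by (rule finite_subset) (use assms(1) in simp)
  then show ?thesis
    unfolding min_gen_card_def using assms(2,3) by (intro Min_le) auto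
qed

context group
begin

lemma subgroup_mult_mem_iff_left:
  assumes "subgroup M G" "x \<in> M" "y \<in> carrier G"
  shows "x \<otimes> y \<in> M \<longleftrightarrow> y \<in> M"
proof
  have x: "x \<in> carrier G" using subgroup.mem_carrier assms(1,2) .
  assume "x \<otimes> y \<in> M"
  then have "inv x \<otimes> (x \<otimes> y) \<in> M"
    using assms(1,2) by (simp add: subgroup.m_closed subgroup.m_inv_closed)
  also have "inv x \<otimes> (x \<otimes> y) = y"
    using x assms(3) by (simp add: m_assoc[symmetric])
  finally show "y \<in> M" .
qed (use assms in \<open>simp add: subgroup.m_closed\<close>)

lemma subgroup_mult_mem_iff_right:
  assumes "subgroup M G" "y \<in> M" "x \<in> carrier G"
  shows "x \<otimes> y \<in> M \<longleftrightarrow> x \<in> M"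
proof
  have y: "y \<in> carrier G" using subgroup.mem_carrier assms(1,2) .
  assume "x \<otimes> y \<in> M"
  then have "(x \<otimes> y) \<otimes> inv y \<in> M"
    using assms(1,2) by (simp add: subgroup.m_closed subgroup.m_inv_closed)
  also have "(x \<otimes> y) \<otimes> inv y = x"
    using y assms(3) by (simp add: m_assoc)
  finally show "x \<in> M" .
qed (use assms in \<open>simp add: subgroup.m_closed\<close>)

lemma generate_insert_generate:
  assumes "A \<subseteq> carrier G" "x \<in> carrier G"
  shows "generate G (insert x (generate G A)) = generate G (insert x A)"
proof (rule antisym)
  have "insert x (generate G A) \<subseteq> generate G (insert x A)"
    using mono_generate[of A "insert x A"] generate.incl[of x "insert x A" G] by blast
  moreover have "subgroup (generate G (insert x A)) G"
    using assms by (intro generate_is_subgroup) blast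
  ultimately show "generate G (insert x (generate G A)) \<subseteq> generate G (insert x A)"
    by (rule generate_subgroup_incl)
  have "insert x A \<subseteq> insert x (generate G A)"
    using generate.incl[of _ A G] by blast
  then show "generate G (insert x A) \<subseteq> generate G (insert x (generate G A))"
    by (rule mono_generate)
qed

lemma exists_element_avoiding_subgroups:
  assumes "finite F" "subgroup K G" "\<And>N. N \<in> F \<Longrightarrow> subgroup N G"
    and "\<And>F' N. F' \<subseteq> F \<Longrightarrow> N \<in> F - F' \<Longrightarrow> \<not> K \<inter> \<Inter> F' \<subseteq> N"
  shows "\<exists>g \<in> K. \<forall>M \<in> F. g \<notin> M"
  using assms
proof (induction F rule: finite_induct)
  case empty
  then show ?case using subgroup.one_closed by blast
next
  case (insert N F)
  have "\<exists>g \<in> K. \<forall>M \<in> F. g \<notin> M"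
  proof (rule insert.IH)
    show "subgroup M G" if "M \<in> F" for M
      using that insert.prems(2) by blast
    show "\<not> K \<inter> \<Inter> F' \<subseteq> M" if "F' \<subseteq> F" "M \<in> F - F'" for F' M
      using that insert.prems(3)[of F' M] by blast
  qed (fact insert.prems(1))
  then obtain g where g: "g \<in> K" "\<forall>M \<in> F. g \<notin> M" ..
  show ?case
  proof (cases "g \<in> N")
    case False
    then show ?thesis using g by blast
  next
    case True
    \<comment> \<open>multiply g by an element lying in every member of F but not in N\<close>
    obtain a where a: "a \<in> K" "\<forall>M \<in> F. a \<in> M" "a \<notin> N"
      using insert.prems(3)[of F N] insert.hyps(2) by blast
    have carrier: "g \<in> carrier G" "a \<in> carrier G"
      using g(1) a(1) subgroup.mem_carrier[OF insert.prems(1)] by auto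
    have "g \<otimes> a \<notin> N"
      using subgroup_mult_mem_iff_left[OF insert.prems(2) True carrier(2)] a(3) by simp
    moreover have "g \<otimes> a \<notin> M" if "M \<in> F" for M
      using subgroup_mult_mem_iff_right[OF insert.prems(2) _ carrier(1), of M] that g(2) a(2) by simp
    ultimately
    show ?thesis using g(1) a(1) subgroup.m_closed[OF insert.prems(1)] by blast
  qed
qed

lemma coatom_join_eq_top:
  assumes M: "M \<in> interval_coatoms G H K" and a: "a \<in> subgroup_interval G H K"
    and "\<not> a \<subseteq> M" and K: "subgroup K G"
  shows "subgroup_join G a M = K"
proof -
  have "subgroup M G" "H \<subseteq> M" "M \<subseteq> K" "subgroup a G" "a \<subseteq> K"
    using M a by (auto simp: interval_coatoms_def subgroup_interval_def)
  then have "a \<union> M \<subseteq> carrier G" by (auto dest: subgroup.subset)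
  define J where "J = generate G (a \<union> M)"
  have "a \<union> M \<subseteq> J" unfolding J_def by (auto intro: generate.incl)
  have "J \<subseteq> K"
    unfolding J_def using \<open>a \<subseteq> K\<close> \<open>M \<subseteq> K\<close> K by (intro generate_subgroup_incl) auto
  have "subgroup J G"
    unfolding J_def using \<open>a \<union> M \<subseteq> carrier G\<close> by (rule generate_is_subgroup)
  then have "J \<in> subgroup_interval G H K"
    using \<open>H \<subseteq> M\<close> \<open>a \<union> M \<subseteq> J\<close> \<open>J \<subseteq> K\<close> by (auto simp: subgroup_interval_def)
  then have "J = K"
    using \<open>a \<union> M \<subseteq> J\<close> M \<open>\<not> a \<subseteq> M\<close> unfolding interval_coatoms_def by blast
  then show ?thesis unfolding J_def subgroup_join_def .
qed

lemma coatom_prime: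
  assumes "distributive_subgroup_interval G t K" "subgroup K G"
    and "M \<in> interval_coatoms G H K" "H \<subseteq> t" "t \<subseteq> M"
    and a: "a \<in> subgroup_interval G t K" and b: "b \<in> subgroup_interval G t K"
    and "a \<inter> b \<subseteq> M"
  shows "a \<subseteq> M \<or> b \<subseteq> M"
proof (rule disjCI)
  assume "\<not> b \<subseteq> M"
  have M: "subgroup M G" "M \<subseteq> K" "M \<in> subgroup_interval G t K"
    using assms(3,5) by (auto simp: interval_coatoms_def subgroup_interval_def)
  have "b \<in> subgroup_interval G H K"
    using b \<open>H \<subseteq> t\<close> by (auto simp: subgroup_interval_def)
  then have "subgroup_join G b M = K"
    using coatom_join_eq_top assms(2,3) \<open>\<not> b \<subseteq> M\<close> by blast
  then have "a = a \<inter> subgroup_join G b M"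
    using a by (auto simp: subgroup_interval_def)
  also have "\<dots> = subgroup_join G (a \<inter> b) (a \<inter> M)"
    using assms(1) a b M(3) unfolding distributive_subgroup_interval_def by blast
  also have "\<dots> \<subseteq> M"
    unfolding subgroup_join_def using \<open>a \<inter> b \<subseteq> M\<close> M(1) by (intro generate_subgroup_incl) auto
  finally show "a \<subseteq> M" .
qed

lemma exists_coatom_above:
  assumes "finite (carrier G)" "L \<in> subgroup_interval G H K" "L \<noteq> K"
  shows "\<exists>M \<in> interval_coatoms G H K. L \<subseteq> M"
proof -
  define S where "S = {M \<in> subgroup_interval G H K. L \<subseteq> M \<and> M \<noteq> K}"
  have "finite S" "S \<noteq> {}"
    using finite_subgroup_interval[OF assms(1)] assms(2,3) unfolding S_def by auto
  then obtain M where M: "M \<in> S" and maximal: "\<forall>M' \<in> S. M \<subseteq> M' \<longrightarrow> M = M'"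
    using finite_has_maximal by blast
  have "L' = M \<or> L' = K" if "L' \<in> subgroup_interval G H K" "M \<subseteq> L'" for L'
    using that M maximal unfolding S_def by blast
  then have "M \<in> interval_coatoms G H K"
    using M unfolding S_def interval_coatoms_def by blast
  then show ?thesis
    using M unfolding S_def by blast
qed

lemma top_interval_coatoms_independent:
  assumes "distributive_subgroup_interval G (top_interval_bottom G H K) K"
    and "subgroup K G" "H \<subseteq> K" "finite F" "F \<subseteq> interval_coatoms G H K"
    and "N \<in> interval_coatoms G H K - F"
  shows "\<not> K \<inter> \<Inter> F \<subseteq> N"
  using assms(4-6)
proof (induction F rule: finite_induct)
  case empty
  then show ?case unfolding interval_coatoms_def subgroup_interval_def by blast
next
  case (insert M F)
  define t where "t = top_interval_bottom G H K"
  have coatom: "subgroup L G \<and> H \<subseteq> L \<and> L \<subseteq> K \<and> t \<subseteq> L" if "L \<in> interval_coatoms G H K" for L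
    using that by (auto simp: t_def top_interval_bottom_def interval_coatoms_def subgroup_interval_def)
  have "H \<subseteq> t"
    using assms(3) unfolding t_def top_interval_bottom_def interval_coatoms_def subgroup_interval_def
    by blast
  have "subgroup L G" if "L \<in> insert K F" for L
    using that insert.prems(1) coatom[of L] assms(2) by blast
  then have "subgroup (\<Inter> (insert K F)) G"
    by (intro subgroups_Inter) auto
  then have KF: "K \<inter> \<Inter> F \<in> subgroup_interval G t K"
    using insert.prems(1) by (auto simp: t_def subgroup_interval_def top_interval_bottom_def)
  have M: "M \<in> subgroup_interval G t K"
    using insert.prems(1) coatom[of M] by (auto simp: subgroup_interval_def)
  have N: "N \<in> interval_coatoms G H K" "t \<subseteq> N"
    using insert.prems(2) coatom[of N] by auto
  have "\<not> M \<subseteq> N"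
    using interval_coatomsD[of M] interval_coatomsD(1,2)[OF N(1)] insert.prems by blast
  moreover have "\<not> K \<inter> \<Inter> F \<subseteq> N"
    using insert by blast
  ultimately have "\<not> (K \<inter> \<Inter> F) \<inter> M \<subseteq> N"
    using coatom_prime[OF assms(1)[folded t_def] assms(2) N(1) \<open>H \<subseteq> t\<close> N(2) KF M] by blast
  then show ?case by (simp add: Int_ac)
qed

lemma top_boolean_imp_generate_insert:
  assumes "finite (carrier G)" "subgroup H G" "subgroup K G" "H \<subseteq> K" "top_boolean G H K"
  shows "\<exists>g \<in> K. generate G (insert g H) = K"
proof -
  let ?C = "interval_coatoms G H K"
  have "finite ?C"
    by (rule finite_subset[OF interval_coatoms_subset finite_subgroup_interval[OF assms(1)]])
  have dist: "distributive_subgroup_interval G (top_interval_bottom G H K) K"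
    using assms(5) boolean_subgroup_interval_imp_distributive unfolding top_boolean_def by blast
  have "\<exists>g \<in> K. \<forall>M \<in> ?C. g \<notin> M"
  proof (rule exists_element_avoiding_subgroups[OF \<open>finite ?C\<close> assms(3)])
    show "subgroup N G" if "N \<in> ?C" for N
      using that by (simp add: interval_coatoms_def subgroup_interval_def)
    show "\<not> K \<inter> \<Inter> F \<subseteq> N" if "F \<subseteq> ?C" "N \<in> ?C - F" for F N
      using top_interval_coatoms_independent[OF dist assms(3,4)] finite_subset[OF that(1) \<open>finite ?C\<close>] that
      by blast
  qed
  then obtain g where g: "g \<in> K" "\<forall>M \<in> ?C. g \<notin> M" ..
  define L where "L = generate G (insert g H)"
  have "insert g H \<subseteq> carrier G"
    using g(1) assms(3,4) subgroup.subset by blast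
  then have "subgroup L G"
    unfolding L_def by (rule generate_is_subgroup)
  moreover have "insert g H \<subseteq> L"
    unfolding L_def by (auto intro: generate.incl)
  moreover have "L \<subseteq> K"
    unfolding L_def using g(1) assms(3,4) by (intro generate_subgroup_incl) auto
  ultimately have "L \<in> subgroup_interval G H K"
    by (auto simp: subgroup_interval_def)
  with \<open>insert g H \<subseteq> L\<close> have "L = K"
    using exists_coatom_above[OF assms(1)] g(2) by blast
  then show ?thesis using g(1) unfolding L_def by blast
qed

lemma generate_image_chain:
  assumes "Hs 0 = {\<one>}"
    and "\<And>i. i < k \<Longrightarrow> f i \<in> carrier G \<and> generate G (insert (f i) (Hs i)) = Hs (Suc i)"
  shows "generate G (f ` {..<k}) = Hs k"
  using assms(2)
proof (induction k)
  case 0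
  then show ?case using assms(1) generate_empty by simp
next
  case (Suc k)
  have "f ` {..<Suc k} = insert (f k) (f ` {..<k})"
    by (simp add: lessThan_Suc)
  moreover have "f ` {..<k} \<subseteq> carrier G"
    using Suc.prems by auto
  ultimately show ?case
    using generate_insert_generate[of "f ` {..<k}" "f k"] Suc by simp
qed

end

theorem corollary6p2:
  fixes G :: "('a, 'b) monoid_scheme" and Hs :: "nat \<Rightarrow> 'a set" and l :: nat
  assumes "group G" and "finite (carrier G)"
    and "\<forall>i \<le> l. subgroup (Hs i) G"
    and "Hs 0 = {\<one>\<^bsub>G\<^esub>}" and "Hs l = carrier G"
    and "\<forall>i < l. Hs i \<subset> Hs (Suc i)"
    and "\<forall>i < l. top_boolean G (Hs i) (Hs (Suc i))"
  shows "min_gen_card G \<le> l"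
proof -
  interpret group G by fact
  have "\<exists>g. i < l \<longrightarrow> g \<in> Hs (Suc i) \<and> generate G (insert g (Hs i)) = Hs (Suc i)" for i
  proof (cases "i < l")
    case True
    then have "subgroup (Hs i) G" "subgroup (Hs (Suc i)) G"
      using assms(3) by simp_all
    then show ?thesis
      using top_boolean_imp_generate_insert[OF assms(2)] assms(6,7) True by blast
  qed simp
  then obtain f where f: "\<And>i. i < l \<Longrightarrow> f i \<in> Hs (Suc i) \<and> generate G (insert (f i) (Hs i)) = Hs (Suc i)"
    using choice[of "\<lambda>i g. i < l \<longrightarrow> g \<in> Hs (Suc i) \<and> generate G (insert g (Hs i)) = Hs (Suc i)"]
    by blast
  have "f i \<in> carrier G" if "i < l" for i
  proof (rule subgroup.mem_carrier)
    show "subgroup (Hs (Suc i)) G"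
      using assms(3) that by simp
  qed (use f[OF that] in blast)
  then have "generate G (f ` {..<l}) = Hs l"
    using f by (intro generate_image_chain[of Hs, OF assms(4)]) blast
  moreover have "f ` {..<l} \<subseteq> carrier G"
    using \<open>\<And>i. i < l \<Longrightarrow> f i \<in> carrier G\<close> by blast
  ultimately have "min_gen_card G \<le> card (f ` {..<l})"
    using min_gen_card_le_card assms(2,5) by metis
  also have "\<dots> \<le> l"
    using card_image_le[of "{..<l}" f] by simp
  finally show ?thesis .
qed

end
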